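(* Let $T:\mathcal{B}(\mathcal{H})\to\mathcal{B}(\mathcal{H})$ be a Markov operator and $p\in\mathcal{B}(\mathcal{H})$ an orthogonal projection. The following are equivalent: (i) $p$ is transient. (ii) There is a family of unit vectors $(\xi_j)_{j\in J}\subseteq\mathcal{H}$ such that $p\mathcal{H}$ is contained in the closed linear span of $\{\xi_j:j\in J\}$ and each rank one operator $t_{\xi_j}$ is $T$-summable. (iii) There is a family of unit vectors $(\xi_j)_{j\in J}\subseteq\mathcal{H}$ such that $p\mathcal{H}$ is contained in the closed linear span of $\{\xi_j:j\in J\}$ and $\sum_{n=0}^\infty\langle T^n(t_{\xi_j})\eta,\eta\rangle<\infty$ for all $j\in J$ and $\eta\in\mathcal{H}$.
   Context: A Markov operator is a normal completely positive unital linear map. For $\xi\in\mathcal{H}$, $t_\xi$ denotes $\eta\mapsto\langle\eta,\xi\rangle\xi$. A positive operator $x$ is $T$-summable if $\sum_{n\ge0}T^n(x)$ converges strongly to a bounded operator. An orthogonal projection $p$ is transient if $p\le\bigvee_{j\in J}p_j$ for some family of $T$-summable orthogonal projections $p_j$. *)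

theory Defs
  imports "HOL-Analysis.Analysis"
begin

text \<open>Complex inner product space: a real normed vector space with a compatible
complex scalar multiplication and a complex inner product, linear in the FIRST
argument and conjugate-linear in the second (so that t_xi eta = <eta,xi> xi is linear).\<close>

class complex_inner = real_normed_vector +
  fixes scaleC :: "complex \<Rightarrow> 'a \<Rightarrow> 'a"
    and cinner :: "'a \<Rightarrow> 'a \<Rightarrow> complex"
  assumes scaleC_add_right: "scaleC a (x + y) = scaleC a x + scaleC a y"
    and scaleC_add_left: "scaleC (a + b) x = scaleC a x + scaleC b x"
    and scaleC_scaleC: "scaleC a (scaleC b x) = scaleC (a * b) x"
    and scaleC_one: "scaleC 1 x = x"
    and scaleR_scaleC: "scaleR r x = scaleC (complex_of_real r) x"
    and cinner_add_left: "cinner (x + y) z = cinner x z + cinner y z"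
    and cinner_scaleC_left: "cinner (scaleC a x) y = a * cinner x y"
    and cinner_commute: "cinner x y = cnj (cinner y x)"
    and cinner_ge_zero: "0 \<le> Re (cinner x x)"
    and cinner_eq_zero_iff: "cinner x x = 0 \<longleftrightarrow> x = 0"
    and norm_eq_sqrt_cinner: "norm x = sqrt (Re (cinner x x))"

class chilbert_space = complex_inner + complete_space

definition bop :: "('a::complex_inner \<Rightarrow> 'a) \<Rightarrow> bool" where
  "bop A \<longleftrightarrow> (\<forall>x y. A (x + y) = A x + A y) \<and> (\<forall>c x. A (scaleC c x) = scaleC c (A x))
            \<and> (\<exists>K. \<forall>x. norm (A x) \<le> norm x * K)"

definition selfadj :: "('a::complex_inner \<Rightarrow> 'a) \<Rightarrow> bool" where
  "selfadj A \<longleftrightarrow> bop A \<and> (\<forall>x y. cinner (A x) y = cinner x (A y))"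

definition pos_op :: "('a::complex_inner \<Rightarrow> 'a) \<Rightarrow> bool" where
  "pos_op A \<longleftrightarrow> bop A \<and> (\<forall>x. Im (cinner (A x) x) = 0 \<and> 0 \<le> Re (cinner (A x) x))"

definition op_le :: "('a::complex_inner \<Rightarrow> 'a) \<Rightarrow> ('a \<Rightarrow> 'a) \<Rightarrow> bool" where
  "op_le A B \<longleftrightarrow> pos_op (\<lambda>x. B x - A x)"

definition orth_proj :: "('a::complex_inner \<Rightarrow> 'a) \<Rightarrow> bool" where
  "orth_proj p \<longleftrightarrow> selfadj p \<and> (\<forall>x. p (p x) = p x)"

definition proj_sup :: "('a::complex_inner \<Rightarrow> 'a) set \<Rightarrow> ('a \<Rightarrow> 'a) \<Rightarrow> bool" where
  "proj_sup P q \<longleftrightarrow> orth_proj q \<and> (\<forall>r\<in>P. op_le r q)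
      \<and> (\<forall>q'. orth_proj q' \<and> (\<forall>r\<in>P. op_le r q') \<longrightarrow> op_le q q')"

definition op_lub :: "('a::complex_inner \<Rightarrow> 'a) set \<Rightarrow> ('a \<Rightarrow> 'a) \<Rightarrow> bool" where
  "op_lub D A \<longleftrightarrow> selfadj A \<and> (\<forall>d\<in>D. op_le d A)
      \<and> (\<forall>B. selfadj B \<and> (\<forall>d\<in>D. op_le d B) \<longrightarrow> op_le A B)"

text \<open>Positivity of an n x n operator matrix (A i j), i.e. of the operator on H^n.\<close>
definition matrix_pos :: "nat \<Rightarrow> (nat \<Rightarrow> nat \<Rightarrow> 'a::complex_inner \<Rightarrow> 'a) \<Rightarrow> bool" where
  "matrix_pos n A \<longleftrightarrow> (\<forall>i<n. \<forall>j<n. bop (A i j)) \<and>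
     (\<forall>x :: nat \<Rightarrow> 'a. Im (\<Sum>i<n. \<Sum>j<n. cinner (A i j (x j)) (x i)) = 0
                      \<and> 0 \<le> Re (\<Sum>i<n. \<Sum>j<n. cinner (A i j (x j)) (x i)))"

definition completely_positive :: "(('a::complex_inner \<Rightarrow> 'a) \<Rightarrow> ('a \<Rightarrow> 'a)) \<Rightarrow> bool" where
  "completely_positive T \<longleftrightarrow> (\<forall>n A. matrix_pos n A \<longrightarrow> matrix_pos n (\<lambda>i j. T (A i j)))"

text \<open>Normality: preservation of suprema of bounded upward directed sets (nets) of
self-adjoint operators.\<close>
definition normal_map :: "(('a::complex_inner \<Rightarrow> 'a) \<Rightarrow> ('a \<Rightarrow> 'a)) \<Rightarrow> bool" where
  "normal_map T \<longleftrightarrow> (\<forall>D A. D \<noteq> {} \<and> (\<forall>d\<in>D. selfadj d)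
        \<and> (\<forall>a\<in>D. \<forall>b\<in>D. \<exists>c\<in>D. op_le a c \<and> op_le b c)
        \<and> op_lub D A \<longrightarrow> op_lub (T ` D) (T A))"

definition markov_operator :: "(('a::complex_inner \<Rightarrow> 'a) \<Rightarrow> ('a \<Rightarrow> 'a)) \<Rightarrow> bool" where
  "markov_operator T \<longleftrightarrow>
     (\<forall>A. bop A \<longrightarrow> bop (T A))
   \<and> (\<forall>A B. bop A \<and> bop B \<longrightarrow> T (\<lambda>x. A x + B x) = (\<lambda>x. T A x + T B x))
   \<and> (\<forall>c A. bop A \<longrightarrow> T (\<lambda>x. scaleC c (A x)) = (\<lambda>x. scaleC c (T A x)))
   \<and> completely_positive T \<and> T id = id \<and> normal_map T"

definition rank_one :: "'a::complex_inner \<Rightarrow> ('a \<Rightarrow> 'a)" where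
  "rank_one \<xi> = (\<lambda>\<eta>. scaleC (cinner \<eta> \<xi>) \<xi>)"

definition T_summable :: "(('a::complex_inner \<Rightarrow> 'a) \<Rightarrow> ('a \<Rightarrow> 'a)) \<Rightarrow> ('a \<Rightarrow> 'a) \<Rightarrow> bool" where
  "T_summable T x \<longleftrightarrow> pos_op x \<and>
     (\<exists>S. bop S \<and> (\<forall>\<eta>. ((\<lambda>N. \<Sum>n<N. (T ^^ n) x \<eta>) \<longlongrightarrow> S \<eta>) sequentially))"

definition transient :: "(('a::complex_inner \<Rightarrow> 'a) \<Rightarrow> ('a \<Rightarrow> 'a)) \<Rightarrow> ('a \<Rightarrow> 'a) \<Rightarrow> bool" where
  "transient T p \<longleftrightarrow> orth_proj p \<and>
     (\<exists>P q. (\<forall>r\<in>P. orth_proj r \<and> T_summable T r) \<and> proj_sup P q \<and> op_le p q)"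

definition cspan :: "'a::complex_inner set \<Rightarrow> 'a set" where
  "cspan X = {y. \<exists>F c. finite F \<and> F \<subseteq> X \<and> y = (\<Sum>x\<in>F. scaleC (c x) x)}"

definition closed_cspan :: "'a::complex_inner set \<Rightarrow> 'a set" where
  "closed_cspan X = closure (cspan X)"

end

theory Submission
  imports Defs
begin

text \<open>Domination drives the argument. If a unit vector \<xi> lies in the range of a projection
r, then t_\<xi> \<le> r, hence T^n(t_\<xi>) \<le> T^n(r) for all n and t_\<xi> inherits T-summability from r.
The join of a family of projections is the projection onto the closed span of their ranges,
so p is transient iff pH lies in the closed span of the ranges of some T-summable
projections; the unit vectors in these ranges witness (ii), and the projections t_\<xi> of (ii)
give back (i). For (iii) \<Longrightarrow> (ii), the partial sums of \<Sum> T^n(t_\<xi>) are increasing positive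
operators with pointwise bounded quadratic forms; by the Baire category theorem the forms are
bounded uniformly, and such a sequence converges strongly (Vigier).\<close>

section \<open>Complex inner product spaces\<close>

lemma cinner_zero_left [simp]: "cinner 0 (y::'a::complex_inner) = 0"
proof -
  have "cinner (0 + 0) y = cinner 0 y + cinner 0 y" by (rule cinner_add_left)
  then show ?thesis by simp
qed

lemma cinner_add_right: "cinner (x::'a::complex_inner) (y + z) = cinner x y + cinner x z"
  by (metis cinner_commute cinner_add_left complex_cnj_add)

lemma cinner_zero_right [simp]: "cinner (x::'a::complex_inner) 0 = 0"
  by (metis cinner_commute cinner_zero_left complex_cnj_zero)

lemma cinner_scaleC_right: "cinner (x::'a::complex_inner) (scaleC a y) = cnj a * cinner x y"
  by (metis cinner_commute cinner_scaleC_left complex_cnj_mult)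

lemma scaleC_minus_one: "scaleC (-1) (x::'a::complex_inner) = - x"
  using scaleR_scaleC[of "-1" x] by simp

lemma scaleC_zero_right [simp]: "scaleC a (0::'a::complex_inner) = 0"
proof -
  have "scaleC a (0 + 0::'a) = scaleC a 0 + scaleC a 0" by (rule scaleC_add_right)
  then show ?thesis by simp
qed

lemma scaleC_zero_left [simp]: "scaleC 0 (x::'a::complex_inner) = 0"
  using scaleR_scaleC[of 0 x] by simp

lemma scaleC_minus_right: "scaleC a (- x::'a::complex_inner) = - scaleC a x"
  by (metis scaleC_minus_one scaleC_scaleC mult.commute)

lemma scaleC_diff_right: "scaleC a (x - y::'a::complex_inner) = scaleC a x - scaleC a y"
  by (metis diff_conv_add_uminus scaleC_add_right scaleC_minus_right)

lemma cinner_minus_left: "cinner (- x) (y::'a::complex_inner) = - cinner x y"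
  by (metis cinner_scaleC_left scaleC_minus_one mult_minus1)

lemma cinner_diff_left: "cinner (x - y) (z::'a::complex_inner) = cinner x z - cinner y z"
  by (metis diff_conv_add_uminus cinner_add_left cinner_minus_left)

lemma cinner_diff_right: "cinner x (y - z::'a::complex_inner) = cinner x y - cinner x z"
  by (metis cinner_commute cinner_diff_left complex_cnj_diff)

lemma cinner_scaleR_left: "cinner (scaleR r x) (y::'a::complex_inner)
  = complex_of_real r * cinner x y"
  by (simp add: scaleR_scaleC cinner_scaleC_left)

lemma cinner_scaleR_right: "cinner x (scaleR r (y::'a::complex_inner))
  = complex_of_real r * cinner x y"
  by (simp add: scaleR_scaleC cinner_scaleC_right)

lemma cinner_sum_left: "cinner (sum f F) (y::'a::complex_inner) = (\<Sum>i\<in>F. cinner (f i) y)"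
  by (induction F rule: infinite_finite_induct) (auto simp: cinner_add_left)

lemma cinner_self: "cinner (x::'a::complex_inner) x = complex_of_real ((norm x)\<^sup>2)"
proof -
  have "Im (cinner x x) = Im (cnj (cinner x x))" using cinner_commute[of x x] by simp
  then have "Im (cinner x x) = 0" by simp
  moreover have "Re (cinner x x) = (norm x)\<^sup>2"
    using norm_eq_sqrt_cinner[of x] cinner_ge_zero[of x] by simp
  ultimately show ?thesis by (simp add: complex_eq_iff)
qed

lemma norm_scaleC: "norm (scaleC a (x::'a::complex_inner)) = cmod a * norm x"
proof -
  have "complex_of_real ((norm (scaleC a x))\<^sup>2) = cinner (scaleC a x) (scaleC a x)"
    by (simp add: cinner_self)
  also have "\<dots> = a * cnj a * cinner x x" by (simp add: cinner_scaleC_left cinner_scaleC_right)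
  also have "\<dots> = complex_of_real ((cmod a * norm x)\<^sup>2)"
    by (simp add: cinner_self complex_norm_square [symmetric] power_mult_distrib)
  finally have "(norm (scaleC a x))\<^sup>2 = (cmod a * norm x)\<^sup>2" using of_real_eq_iff by blast
  then show ?thesis by (simp add: power2_eq_iff_nonneg)
qed

lemma norm_cinner_le: "cmod (cinner (x::'a::complex_inner) y) \<le> norm x * norm y"
proof (cases "y = 0")
  case False
  define c where "c = cinner x y / cinner y y"
  have ny: "norm y > 0" using False by simp
  have "complex_of_real ((norm (x - scaleC c y))\<^sup>2) = cinner (x - scaleC c y) (x - scaleC c y)"
    by (simp add: cinner_self)
  also have "\<dots> = cinner x x - cnj c * cinner x y - c * cinner y x + c * cnj c * cinner y y"
    by (simp add: cinner_diff_left cinner_diff_right cinner_scaleC_left cinner_scaleC_right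
        algebra_simps)
  also have "\<dots> = complex_of_real ((norm x)\<^sup>2 - (cmod (cinner x y))\<^sup>2 / (norm y)\<^sup>2)"
    using ny by (simp add: c_def cinner_commute[of y x] cinner_self complex_norm_square [symmetric]
        field_simps)
  finally have "(norm (x - scaleC c y))\<^sup>2 = (norm x)\<^sup>2 - (cmod (cinner x y))\<^sup>2 / (norm y)\<^sup>2"
    using of_real_eq_iff by blast
  then have "(cmod (cinner x y))\<^sup>2 / (norm y)\<^sup>2 \<le> (norm x)\<^sup>2"
    by (metis diff_ge_0_iff_ge zero_le_power2)
  then have "(cmod (cinner x y))\<^sup>2 \<le> (norm x * norm y)\<^sup>2"
    using ny by (simp add: divide_le_eq power_mult_distrib)
  then show ?thesis by (meson power2_le_imp_le mult_nonneg_nonneg norm_ge_zero)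
qed simp

lemma norm_parallelogram:
  "(norm (a + b))\<^sup>2 + (norm (a - b))\<^sup>2 = 2 * (norm (a::'a::complex_inner))\<^sup>2 + 2 * (norm b)\<^sup>2"
proof -
  have "complex_of_real ((norm (a + b))\<^sup>2 + (norm (a - b))\<^sup>2)
      = cinner (a + b) (a + b) + cinner (a - b) (a - b)"
    by (simp add: cinner_self)
  also have "\<dots> = 2 * cinner a a + 2 * cinner b b"
    by (simp add: cinner_add_left cinner_add_right cinner_diff_left cinner_diff_right algebra_simps)
  also have "\<dots> = complex_of_real (2 * (norm a)\<^sup>2 + 2 * (norm b)\<^sup>2)" by (simp add: cinner_self)
  finally show ?thesis using of_real_eq_iff by blast
qed

lemma bounded_bilinear_cinner: "bounded_bilinear (cinner :: 'a::complex_inner \<Rightarrow> 'a \<Rightarrow> complex)"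
proof
  fix a a' b :: 'a and r :: real
  show "cinner (a + a') b = cinner a b + cinner a' b" by (rule cinner_add_left)
  show "cinner b (a + a') = cinner b a + cinner b a'" by (rule cinner_add_right)
  show "cinner (r *\<^sub>R a) b = r *\<^sub>R cinner a b" by (simp add: cinner_scaleR_left scaleR_conv_of_real)
  show "cinner b (r *\<^sub>R a) = r *\<^sub>R cinner b a"
    by (simp add: cinner_scaleR_right scaleR_conv_of_real)
  show "\<exists>K. \<forall>a b::'a. norm (cinner a b) \<le> norm a * norm b * K"
    by (rule exI[of _ 1]) (simp add: norm_cinner_le)
qed

lemmas tendsto_cinner = bounded_bilinear.tendsto[OF bounded_bilinear_cinner]

lemma bounded_linear_scaleC: "bounded_linear (scaleC c :: 'a::complex_inner \<Rightarrow> 'a)"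
proof
  fix x y :: 'a and r :: real
  show "scaleC c (x + y) = scaleC c x + scaleC c y" by (rule scaleC_add_right)
  show "scaleC c (r *\<^sub>R x) = r *\<^sub>R scaleC c x"
    by (simp add: scaleR_scaleC scaleC_scaleC mult.commute)
  show "\<exists>K. \<forall>x::'a. norm (scaleC c x) \<le> norm x * K"
    by (rule exI[of _ "cmod c"]) (simp add: norm_scaleC mult.commute)
qed

section \<open>Bounded and positive operators, projections\<close>

lemma bopI:
  assumes "\<And>x y. A (x + y) = A x + A y" "\<And>c x. A (scaleC c x) = scaleC c (A x)"
    and "\<And>x. norm (A x) \<le> norm x * K"
  shows "bop A"
  unfolding bop_def by (intro conjI allI exI[where x=K] assms)

lemma bop_add: "bop A \<Longrightarrow> A (x + y) = A x + A y"
  by (simp add: bop_def)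

lemma bop_scaleC: "bop A \<Longrightarrow> A (scaleC c x) = scaleC c (A x)"
  by (simp add: bop_def)

lemma bop_scaleR: "bop A \<Longrightarrow> A (scaleR r x) = scaleR r (A x)"
  by (simp add: bop_def scaleR_scaleC)

lemma bop_zero: "bop A \<Longrightarrow> A 0 = 0"
  using bop_scaleC[of A 0 0] by simp

lemma bop_diff: "bop A \<Longrightarrow> A (x - y) = A x - A y"
  using bop_add[of A x "- y"] bop_scaleC[of A "-1" y] by (simp add: scaleC_minus_one)

lemma bop_bound:
  assumes "bop A"
  obtains K where "K > 0" "\<And>x. norm (A x) \<le> norm x * K"
proof -
  from assms obtain K where K: "\<And>x. norm (A x) \<le> norm x * K" by (auto simp: bop_def)
  have "norm (A x) \<le> norm x * (max K 0 + 1)" for x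
    using K[of x] by (smt (verit) mult_left_mono norm_ge_zero)
  then show ?thesis using that[of "max K 0 + 1"] by auto
qed

lemma bop_bounded_linear: "bop A \<Longrightarrow> bounded_linear A"
  by unfold_locales (auto simp: bop_def bop_scaleR)

lemma bop_tendsto: "bop A \<Longrightarrow> (f \<longlongrightarrow> l) F \<Longrightarrow> ((\<lambda>n. A (f n)) \<longlongrightarrow> A l) F"
  using bounded_linear.tendsto[OF bop_bounded_linear] by blast

lemma bop_zero_op: "bop (\<lambda>x::'a::complex_inner. 0::'a)"
  by (auto simp: bop_def intro: exI[of _ 0])

lemma bop_add_op:
  assumes "bop A" "bop B"
  shows "bop (\<lambda>x. A x + B x)"
proof -
  obtain K where K: "\<And>x. norm (A x) \<le> norm x * K" using bop_bound[OF assms(1)] by blast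
  obtain L where L: "\<And>x. norm (B x) \<le> norm x * L" using bop_bound[OF assms(2)] by blast
  show ?thesis
  proof (rule bopI[where K = "K + L"])
    show "norm (A x + B x) \<le> norm x * (K + L)" for x
      using K[of x] L[of x] norm_triangle_ineq[of "A x" "B x"] by (simp add: distrib_left)
  qed (simp_all add: assms bop_add bop_scaleC scaleC_add_right)
qed

lemma bop_scaleC_op:
  assumes "bop A"
  shows "bop (\<lambda>x. scaleC c (A x))"
proof -
  obtain K where K: "\<And>x. norm (A x) \<le> norm x * K" using bop_bound[OF assms] by blast
  show ?thesis
  proof (rule bopI[where K = "cmod c * K"])
    show "norm (scaleC c (A x)) \<le> norm x * (cmod c * K)" for x
      using mult_left_mono[OF K[of x], of "cmod c"] by (simp add: norm_scaleC mult.left_commute)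
  qed (simp_all add: assms bop_add bop_scaleC scaleC_add_right scaleC_scaleC mult.commute)
qed

lemma bop_diff_op: "bop A \<Longrightarrow> bop B \<Longrightarrow> bop (\<lambda>x. A x - B x)"
  using bop_add_op[OF _ bop_scaleC_op, of A B "-1"] by (simp add: scaleC_minus_one)

lemma bop_sum_op: "(\<And>i. i \<in> F \<Longrightarrow> bop (B i)) \<Longrightarrow> bop (\<lambda>x. \<Sum>i\<in>F. B i x)"
  by (induction F rule: infinite_finite_induct) (simp_all add: bop_zero_op bop_add_op)

lemma pos_op_bop: "pos_op A \<Longrightarrow> bop A"
  by (simp add: pos_op_def)

lemma pos_op_ge0: "pos_op A \<Longrightarrow> 0 \<le> Re (cinner (A x) x)"
  by (simp add: pos_op_def)

lemma pos_op_cinner_real: "pos_op A \<Longrightarrow> cinner (A x) x = complex_of_real (Re (cinner (A x) x))"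
  by (simp add: pos_op_def complex_eq_iff)

lemma pos_op_sum: "(\<And>i. i \<in> F \<Longrightarrow> pos_op (B i)) \<Longrightarrow> pos_op (\<lambda>x. \<Sum>i\<in>F. B i x)"
  by (simp add: pos_op_def bop_sum_op cinner_sum_left sum_nonneg)

lemma op_le_quadratic: "op_le A B \<Longrightarrow> Re (cinner (A x) x) \<le> Re (cinner (B x) x)"
  using pos_op_ge0[of "\<lambda>x. B x - A x" x] by (simp add: op_le_def cinner_diff_left)

text \<open>Polarisation: the form is real at x + y and at x + i y.\<close>

lemma pos_op_hermitian:
  assumes "pos_op A"
  shows "cinner (A y) x = cnj (cinner (A x) y)"
proof -
  have bA: "bop A" using assms by (rule pos_op_bop)
  have real: "Im (cinner (A z) z) = 0" for z using assms by (simp add: pos_op_def)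
  have expand: "cinner (A (u + v)) (u + v)
      = cinner (A u) u + cinner (A u) v + cinner (A v) u + cinner (A v) v" for u v
    by (simp add: bop_add[OF bA] cinner_add_left cinner_add_right)
  have "Im (cinner (A x) y) + Im (cinner (A y) x) = 0"
    using real[of "x + y"] real[of x] real[of y] by (simp add: expand)
  moreover have "Im (cinner (A x) (scaleC \<i> y)) + Im (cinner (A (scaleC \<i> y)) x) = 0"
    using real[of "x + scaleC \<i> y"] real[of x] real[of "scaleC \<i> y"] by (simp add: expand)
  then have "Re (cinner (A y) x) - Re (cinner (A x) y) = 0"
    by (simp add: bop_scaleC[OF bA] cinner_scaleC_left cinner_scaleC_right)
  ultimately show ?thesis by (simp add: complex_eq_iff)
qed

text \<open>Cauchy--Schwarz for the form of D: expand its positivity at x - D x / C.\<close>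

lemma pos_op_norm_sq_le:
  assumes D: "pos_op D" and "C > 0" and bound: "\<And>z. Re (cinner (D z) z) \<le> C * (norm z)\<^sup>2"
  shows "(norm (D x))\<^sup>2 \<le> C * Re (cinner (D x) x)"
proof -
  have bD: "bop D" using D by (rule pos_op_bop)
  define a where "a = (norm (D x))\<^sup>2"
  define t where "t = 1 / C"
  define z where "z = D x"
  have h1: "cinner (D x) z = complex_of_real a" by (simp add: z_def a_def cinner_self)
  have h2: "cinner (D z) x = complex_of_real a"
    using pos_op_hermitian[OF D, of z x] h1 by simp
  have "0 \<le> Re (cinner (D (x - scaleR t z)) (x - scaleR t z))" by (rule pos_op_ge0[OF D])
  also have "cinner (D (x - scaleR t z)) (x - scaleR t z) =
      cinner (D x) x - complex_of_real t * cinner (D x) z - complex_of_real t * cinner (D z) x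
      + complex_of_real t * complex_of_real t * cinner (D z) z"
    by (simp add: bop_diff[OF bD] bop_scaleR[OF bD] cinner_diff_left cinner_diff_right
        cinner_scaleR_left cinner_scaleR_right algebra_simps)
  finally have "0 \<le> Re (cinner (D x) x) - 2 * t * a + t * t * Re (cinner (D z) z)"
    by (simp add: h1 h2 algebra_simps)
  moreover have "Re (cinner (D z) z) \<le> C * a" using bound[of z] by (simp add: a_def z_def)
  ultimately have "0 \<le> Re (cinner (D x) x) - 2 * t * a + t * t * (C * a)"
    by (smt (verit) mult_left_mono zero_le_square)
  then have "0 \<le> Re (cinner (D x) x) - a / C"
    using \<open>C > 0\<close> by (simp add: t_def field_simps power2_eq_square)
  then show ?thesis using \<open>C > 0\<close> by (simp add: a_def field_simps)
qed

lemma pos_op_norm_le: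
  assumes "pos_op D" and "C > 0" and bound: "\<And>z. Re (cinner (D z) z) \<le> C * (norm z)\<^sup>2"
  shows "norm (D x) \<le> norm x * C"
proof -
  have "(norm (D x))\<^sup>2 \<le> C * Re (cinner (D x) x)" by (rule pos_op_norm_sq_le[OF assms])
  also have "\<dots> \<le> C * (C * (norm x)\<^sup>2)" using bound \<open>C > 0\<close> by (intro mult_left_mono) auto
  also have "\<dots> = (norm x * C)\<^sup>2" by (simp add: power2_eq_square)
  finally show ?thesis
    using \<open>C > 0\<close> by (meson power2_le_imp_le mult_nonneg_nonneg norm_ge_zero less_imp_le)
qed

lemma orth_proj_bop: "orth_proj q \<Longrightarrow> bop q"
  by (simp add: orth_proj_def selfadj_def)

lemma orth_proj_selfadj: "orth_proj q \<Longrightarrow> cinner (q x) y = cinner x (q y)"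
  by (simp add: orth_proj_def selfadj_def)

lemma orth_proj_idem: "orth_proj q \<Longrightarrow> q (q x) = q x"
  by (simp add: orth_proj_def)

lemma orth_proj_range: "orth_proj q \<Longrightarrow> range q = {x. q x = x}"
  by (auto simp: orth_proj_idem) (metis rangeI)

lemma orth_proj_cinner: "orth_proj q \<Longrightarrow> cinner (q x) x = complex_of_real ((norm (q x))\<^sup>2)"
  by (metis orth_proj_idem orth_proj_selfadj cinner_self)

lemma orth_proj_pos_op: "orth_proj q \<Longrightarrow> pos_op q"
  by (simp add: pos_op_def orth_proj_bop orth_proj_cinner)

lemma orth_proj_pythagoras:
  assumes "orth_proj q"
  shows "(norm (x - q x))\<^sup>2 = (norm x)\<^sup>2 - (norm (q x))\<^sup>2"
proof -
  have "complex_of_real ((norm (x - q x))\<^sup>2) = cinner (x - q x) (x - q x)"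
    by (simp add: cinner_self)
  also have "\<dots> = cinner x x - cinner x (q x) - cinner (q x) x + cinner (q x) (q x)"
    by (simp add: cinner_diff_left cinner_diff_right)
  also have "\<dots> = complex_of_real ((norm x)\<^sup>2 - (norm (q x))\<^sup>2)"
    using orth_proj_cinner[OF assms, of x] cinner_commute[of x "q x"] by (simp add: cinner_self)
  finally show ?thesis using of_real_eq_iff by blast
qed

lemma op_le_orth_proj_iff:
  assumes r: "orth_proj r" and q: "orth_proj q"
  shows "op_le r q \<longleftrightarrow> range r \<subseteq> range q"
proof
  assume "op_le r q"
  have "q (r x) = r x" for x
  proof -
    have "(norm (r x))\<^sup>2 \<le> (norm (q (r x)))\<^sup>2"
      using op_le_quadratic[OF \<open>op_le r q\<close>, of "r x"]
      by (simp add: orth_proj_cinner[OF q] orth_proj_idem[OF r] cinner_self)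
    then have "(norm (r x - q (r x)))\<^sup>2 \<le> 0" by (simp add: orth_proj_pythagoras[OF q])
    then show ?thesis by simp
  qed
  then show "range r \<subseteq> range q" by (metis image_subsetI rangeI)
next
  assume "range r \<subseteq> range q"
  then have qr: "q (r x) = r x" for x using orth_proj_range[OF q] by blast
  have "cinner (r x) x = cinner (r x) (q x)" for x
    by (metis qr orth_proj_selfadj[OF q])
  then have "(norm (r x))\<^sup>2 \<le> norm (r x) * norm (q x)" for x
    by (metis orth_proj_cinner[OF r] norm_cinner_le norm_of_real abs_power2 real_norm_def)
  then have "norm (r x) \<le> norm (q x)" for x
    by (metis mult_le_cancel_left1 norm_ge_zero order.trans power2_eq_square not_le
        mult_le_cancel_right1 zero_less_mult_iff mult_left_le_imp_le)
  then have "(norm (r x))\<^sup>2 \<le> (norm (q x))\<^sup>2" for x by (simp add: power_mono)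
  then show "op_le r q"
    unfolding op_le_def pos_op_def
    by (simp add: bop_diff_op orth_proj_bop r q cinner_diff_left orth_proj_cinner)
qed

lemma orth_proj_rank_one:
  assumes "norm \<xi> = 1"
  shows "orth_proj (rank_one (\<xi>::'a::complex_inner))"
proof -
  have "bop (rank_one \<xi>)"
  proof (rule bopI[where K = 1])
    show "norm (rank_one \<xi> x) \<le> norm x * 1" for x
      using norm_cinner_le[of x \<xi>] assms by (simp add: rank_one_def norm_scaleC)
  qed (simp_all add: rank_one_def cinner_add_left scaleC_add_left cinner_scaleC_left scaleC_scaleC)
  moreover have "cinner (rank_one \<xi> x) y = cinner x (rank_one \<xi> y)" for x y
    by (simp add: rank_one_def cinner_scaleC_left cinner_scaleC_right cinner_commute[of \<xi> y]
        mult.commute)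
  moreover have "rank_one \<xi> (rank_one \<xi> x) = rank_one \<xi> x" for x
    using assms by (simp add: rank_one_def cinner_scaleC_left cinner_self)
  ultimately show ?thesis by (simp add: orth_proj_def selfadj_def)
qed

lemma rank_one_self: "norm \<xi> = 1 \<Longrightarrow> rank_one \<xi> \<xi> = \<xi>"
  by (simp add: rank_one_def cinner_self scaleC_one)

section \<open>Closed subspaces and orthogonal projections onto them\<close>

definition csubspace :: "'a::complex_inner set \<Rightarrow> bool" where
  "csubspace M \<longleftrightarrow> 0 \<in> M \<and> (\<forall>x\<in>M. \<forall>y\<in>M. x + y \<in> M) \<and> (\<forall>c. \<forall>x\<in>M. scaleC c x \<in> M)"

lemma csubspace_zero: "csubspace M \<Longrightarrow> 0 \<in> M"
  by (simp add: csubspace_def)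

lemma csubspace_add: "csubspace M \<Longrightarrow> x \<in> M \<Longrightarrow> y \<in> M \<Longrightarrow> x + y \<in> M"
  by (simp add: csubspace_def)

lemma csubspace_scaleC: "csubspace M \<Longrightarrow> x \<in> M \<Longrightarrow> scaleC c x \<in> M"
  by (simp add: csubspace_def)

lemma csubspace_scaleR: "csubspace M \<Longrightarrow> x \<in> M \<Longrightarrow> scaleR r x \<in> M"
  by (simp add: scaleR_scaleC csubspace_scaleC)

lemma csubspace_diff:
  assumes "csubspace M" "x \<in> M" "y \<in> M"
  shows "x - y \<in> M"
proof -
  have "x + scaleC (-1) y \<in> M" by (intro csubspace_add csubspace_scaleC assms)
  then show ?thesis by (simp add: scaleC_minus_one)
qed

lemma csubspace_sum: "csubspace M \<Longrightarrow> (\<And>i. i \<in> F \<Longrightarrow> f i \<in> M) \<Longrightarrow> sum f F \<in> M"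
  by (induction F rule: infinite_finite_induct) (auto simp: csubspace_zero csubspace_add)

text \<open>The midpoint of two points of M is again in M, so the parallelogram law forces a
minimising sequence to be Cauchy.\<close>

lemma csubspace_minimizing_Cauchy:
  assumes M: "csubspace M" and yM: "\<And>n. y n \<in> M"
    and lim: "(\<lambda>n. (norm (x - y n))\<^sup>2) \<longlonglongrightarrow> (infdist x M)\<^sup>2"
  shows "Cauchy y"
proof (rule metric_CauchyI)
  fix e :: real assume "e > 0"
  define f where "f n = (norm (x - y n))\<^sup>2 - (infdist x M)\<^sup>2" for n
  have "f \<longlonglongrightarrow> 0"
    using tendsto_diff[OF lim tendsto_const[of "(infdist x M)\<^sup>2"]] unfolding f_def by simp
  then obtain N where N: "\<And>n. n \<ge> N \<Longrightarrow> \<bar>f n\<bar> < e\<^sup>2 / 4"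
    using \<open>e > 0\<close> by (metis LIMSEQ_D real_norm_def diff_zero zero_less_divide_iff zero_less_numeral
        zero_less_power)
  have "dist (y n) (y m) < e" if "n \<ge> N" "m \<ge> N" for n m
  proof -
    define mid where "mid = scaleR (1/2) (y n + y m)"
    have "mid \<in> M" unfolding mid_def by (intro csubspace_scaleR csubspace_add yM M)
    then have "(infdist x M)\<^sup>2 \<le> (norm (x - mid))\<^sup>2"
      by (simp add: infdist_le power_mono infdist_nonneg dist_norm flip: dist_norm)
    moreover have "(x - y n) + (x - y m) = scaleR 2 (x - mid)"
      by (simp add: mid_def algebra_simps scaleR_2)
    then have "4 * (norm (x - mid))\<^sup>2 + (norm (y n - y m))\<^sup>2
        = 2 * (norm (x - y n))\<^sup>2 + 2 * (norm (x - y m))\<^sup>2"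
      using norm_parallelogram[of "x - y n" "x - y m"]
      by (simp add: power2_eq_square norm_minus_commute)
    ultimately have "(norm (y n - y m))\<^sup>2 \<le> 2 * f n + 2 * f m" by (simp add: f_def)
    also have "\<dots> < e\<^sup>2" using N[OF that(1)] N[OF that(2)] by simp
    finally show ?thesis using \<open>e > 0\<close> by (simp add: dist_norm power2_less_imp_less)
  qed
  then show "\<exists>N. \<forall>n\<ge>N. \<forall>m\<ge>N. dist (y n) (y m) < e" by blast
qed

lemma closed_csubspace_nearest_point:
  fixes M :: "'a::chilbert_space set"
  assumes M: "csubspace M" "closed M"
  obtains m where "m \<in> M" "\<And>y. y \<in> M \<Longrightarrow> norm (x - m) \<le> norm (x - y)"
proof -
  define d where "d = infdist x M"
  have ne: "M \<noteq> {}" using csubspace_zero[OF M(1)] by blast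
  have "\<exists>y\<in>M. norm (x - y) < d + 1 / (real n + 1)" for n :: nat
  proof -
    have "(INF a\<in>M. dist x a) < d + 1 / (real n + 1)"
      using infdist_notempty[OF ne, of x] by (simp add: d_def add_pos_nonneg)
    moreover have "bdd_below ((\<lambda>a. dist x a) ` M)" by (rule bdd_belowI[of _ 0]) auto
    ultimately show ?thesis by (simp add: cINF_less_iff[OF ne] dist_norm)
  qed
  then obtain y where yM: "\<And>n. y n \<in> M" and yd: "\<And>n. norm (x - y n) < d + 1 / (real n + 1)"
    by metis
  have ylim: "(\<lambda>n. norm (x - y n)) \<longlonglongrightarrow> d"
  proof (rule tendsto_sandwich[OF _ _ tendsto_const])
    show "\<forall>\<^sub>F n in sequentially. d \<le> norm (x - y n)"
      using yM by (simp add: d_def infdist_le flip: dist_norm)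
    show "\<forall>\<^sub>F n in sequentially. norm (x - y n) \<le> d + 1 / (real n + 1)"
      using yd by (simp add: less_imp_le)
    show "(\<lambda>n. d + 1 / (real n + 1)) \<longlonglongrightarrow> d"
      using tendsto_add[OF tendsto_const[of d] LIMSEQ_inverse_real_of_nat_add[of 0]]
      by (simp add: inverse_eq_divide add.commute)
  qed
  have "Cauchy y"
    using csubspace_minimizing_Cauchy[OF M(1) yM] tendsto_power[OF ylim, of 2] by (simp add: d_def)
  then obtain m where lim: "y \<longlonglongrightarrow> m" using Cauchy_convergent_iff convergent_def by blast
  have "m \<in> M" using M(2) yM lim closed_sequentially by blast
  moreover have "norm (x - m) = d"
    using LIMSEQ_unique[OF tendsto_norm[OF tendsto_diff[OF tendsto_const lim]] ylim] .
  ultimately show ?thesis using that by (simp add: d_def infdist_le flip: dist_norm)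
qed

text \<open>Otherwise the step from m to m + a z with a = c / (norm z ^ 2 + 1), where c is the inner
product in question, would come strictly closer to x.\<close>

lemma nearest_point_orthogonal:
  assumes M: "csubspace M" and "m \<in> M" and nearest: "\<And>y. y \<in> M \<Longrightarrow> norm (x - m) \<le> norm (x - y)"
    and "z \<in> M"
  shows "cinner (x - m) z = 0"
proof (rule ccontr)
  define c where "c = cinner (x - m) z"
  define w where "w = x - m"
  define s where "s = 1 / ((norm z)\<^sup>2 + 1)"
  define a where "a = complex_of_real s * c"
  have pz: "(norm z)\<^sup>2 + 1 > 0" using zero_le_power2[of "norm z"] by linarith
  assume "cinner (x - m) z \<noteq> 0"
  then have "s * (cmod c)\<^sup>2 > 0" using pz by (simp add: c_def s_def)
  have "m + scaleC a z \<in> M" by (intro csubspace_add csubspace_scaleC M \<open>m \<in> M\<close> \<open>z \<in> M\<close>)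
  then have "norm w \<le> norm (w - scaleC a z)"
    using nearest by (simp add: w_def algebra_simps)
  then have ineq: "(norm w)\<^sup>2 \<le> (norm (w - scaleC a z))\<^sup>2" by (simp add: power_mono)
  have "complex_of_real ((norm (w - scaleC a z))\<^sup>2) = cinner (w - scaleC a z) (w - scaleC a z)"
    by (simp add: cinner_self)
  also have "\<dots> = cinner w w - cnj a * cinner w z - a * cinner z w + a * cnj a * cinner z z"
    by (simp add: cinner_diff_left cinner_diff_right cinner_scaleC_left cinner_scaleC_right
        algebra_simps)
  also have "\<dots> = complex_of_real ((norm w)\<^sup>2 - 2 * s * (cmod c)\<^sup>2
        + s * s * (cmod c)\<^sup>2 * (norm z)\<^sup>2)"
    using complex_norm_square[of c]
    by (simp add: a_def c_def w_def cinner_self cinner_commute[of z "x - m"] algebra_simps)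
  finally have "(norm (w - scaleC a z))\<^sup>2
      = (norm w)\<^sup>2 - 2 * s * (cmod c)\<^sup>2 + s * s * (cmod c)\<^sup>2 * (norm z)\<^sup>2"
    using of_real_eq_iff by blast
  with ineq have "0 \<le> s * (cmod c)\<^sup>2 * (s * (norm z)\<^sup>2 - 2)" by (simp add: algebra_simps)
  moreover have "s * (norm z)\<^sup>2 < 1"
    using pz by (simp add: s_def field_simps)
  ultimately show False using \<open>s * (cmod c)\<^sup>2 > 0\<close> by (simp add: zero_le_mult_iff)
qed

lemma orthogonal_decomposition_unique:
  assumes "csubspace M" "m1 \<in> M" "m2 \<in> M"
    and "\<forall>y\<in>M. cinner (x - m1) y = 0" "\<forall>y\<in>M. cinner (x - m2) y = 0"
  shows "m1 = m2"
proof -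
  have "m1 - m2 \<in> M" by (rule csubspace_diff[OF assms(1-3)])
  then have "cinner (m1 - m2) (m1 - m2) = 0"
    using assms(4,5) cinner_diff_left[of "x - m2" "x - m1" "m1 - m2"] by simp
  then show ?thesis by (simp only: cinner_eq_zero_iff right_minus_eq)
qed

lemma orth_proj_onto:
  fixes M :: "'a::chilbert_space set"
  assumes M: "csubspace M" "closed M"
  obtains q where "orth_proj q" "range q = M"
proof -
  have "\<exists>m. m \<in> M \<and> (\<forall>y\<in>M. cinner (x - m) y = 0)" for x
    using closed_csubspace_nearest_point[OF M, of x] nearest_point_orthogonal[OF M(1)] by metis
  then obtain P where PM: "\<And>x. P x \<in> M" and Porth: "\<And>x y. y \<in> M \<Longrightarrow> cinner (x - P x) y = 0"
    by metis
  have Punique: "P x = m" if "m \<in> M" "\<forall>y\<in>M. cinner (x - m) y = 0" for x m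
    using orthogonal_decomposition_unique[OF M(1) PM that(1)] Porth that(2) by blast
  have Pfix: "P x = x" if "x \<in> M" for x
    using Punique[OF that] by simp
  have Porth': "cinner y (x - P x) = 0" if "y \<in> M" for x y
    using Porth[OF that, of x] cinner_commute[of y "x - P x"] by simp
  have "norm (P x) \<le> norm x * 1" for x
  proof -
    have "cinner x x = cinner (x - P x) (x - P x) + cinner (P x) (P x)"
      using Porth[OF PM, of x x] Porth'[OF PM, of x x]
      by (simp add: cinner_diff_left cinner_diff_right)
    then have "(norm x)\<^sup>2 = (norm (x - P x))\<^sup>2 + (norm (P x))\<^sup>2"
      unfolding cinner_self of_real_add [symmetric] of_real_eq_iff .
    then have "(norm (P x))\<^sup>2 \<le> (norm x)\<^sup>2" by simp
    then have "norm (P x) \<le> norm x" by (meson power2_le_imp_le norm_ge_zero)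
    then show ?thesis by simp
  qed
  moreover have "P (x + y) = P x + P y" for x y
  proof (rule Punique)
    have split: "x + y - (P x + P y) = (x - P x) + (y - P y)" by simp
    show "\<forall>z\<in>M. cinner (x + y - (P x + P y)) z = 0"
      unfolding split cinner_add_left using Porth by simp
  qed (intro csubspace_add M(1) PM)
  moreover have "P (scaleC c x) = scaleC c (P x)" for c x
  proof (rule Punique)
    show "\<forall>z\<in>M. cinner (scaleC c x - scaleC c (P x)) z = 0"
      using Porth by (simp add: scaleC_diff_right [symmetric] cinner_scaleC_left)
  qed (intro csubspace_scaleC M(1) PM)
  ultimately have "bop P" by (intro bopI)
  moreover have "cinner (P x) y = cinner x (P y)" for x y
    using Porth'[OF PM[of x], of y] Porth[OF PM[of y], of x]
    by (simp add: cinner_diff_left cinner_diff_right)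
  ultimately have "orth_proj P" by (simp add: orth_proj_def selfadj_def Pfix PM)
  moreover have "range P = M" using PM Pfix by (metis image_subsetI rangeI subsetI subset_antisym)
  ultimately show ?thesis using that by blast
qed

lemma orth_proj_range_closed_csubspace:
  assumes "orth_proj q"
  shows "csubspace (range q)" "closed (range q)"
proof -
  have bq: "bop q" using assms by (rule orth_proj_bop)
  show "csubspace (range q)"
    unfolding orth_proj_range[OF assms] csubspace_def
    by (simp add: bop_zero[OF bq] bop_add[OF bq] bop_scaleC[OF bq])
  have "continuous_on UNIV (\<lambda>x. q x - x)"
    using bounded_linear.continuous_on[OF bop_bounded_linear[OF bq] continuous_on_id]
    by (intro continuous_intros) auto
  then have "closed {x. q x - x = 0}" by (intro closed_Collect_eq) auto
  then show "closed (range q)" by (simp add: orth_proj_range[OF assms])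
qed

lemma cspan_csubspace: "csubspace (cspan X)"
  unfolding csubspace_def
proof (intro conjI ballI allI)
  show "0 \<in> cspan X" unfolding cspan_def by (rule CollectI, rule exI[of _ "{}"]) simp
next
  fix x y assume "x \<in> cspan X" "y \<in> cspan X"
  then obtain F c G d where F: "finite F" "F \<subseteq> X" "x = (\<Sum>v\<in>F. scaleC (c v) v)"
    and G: "finite G" "G \<subseteq> X" "y = (\<Sum>v\<in>G. scaleC (d v) v)"
    unfolding cspan_def by blast
  define c' where "c' v = (if v \<in> F then c v else 0)" for v
  define d' where "d' v = (if v \<in> G then d v else 0)" for v
  have "x = (\<Sum>v\<in>F \<union> G. scaleC (c' v) v)"
    unfolding F(3) using F(1) G(1) by (intro sum.mono_neutral_cong_left) (auto simp: c'_def)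
  moreover have "y = (\<Sum>v\<in>F \<union> G. scaleC (d' v) v)"
    unfolding G(3) using F(1) G(1) by (intro sum.mono_neutral_cong_left) (auto simp: d'_def)
  ultimately have "x + y = (\<Sum>v\<in>F \<union> G. scaleC (c' v + d' v) v)"
    by (simp add: scaleC_add_left sum.distrib)
  then show "x + y \<in> cspan X"
    unfolding cspan_def using F G by (intro CollectI exI[of _ "F \<union> G"] exI) auto
next
  fix a x assume "x \<in> cspan X"
  then obtain F c where F: "finite F" "F \<subseteq> X" "x = (\<Sum>v\<in>F. scaleC (c v) v)"
    unfolding cspan_def by blast
  have "scaleC a x = (\<Sum>v\<in>F. scaleC (a * c v) v)"
    unfolding F(3) by (induction F rule: infinite_finite_induct)
      (simp_all add: scaleC_add_right scaleC_scaleC)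
  then show "scaleC a x \<in> cspan X" unfolding cspan_def using F by (intro CollectI exI) auto
qed

lemma in_cspan: "\<xi> \<in> X \<Longrightarrow> \<xi> \<in> cspan X"
  unfolding cspan_def
  by (rule CollectI, rule exI[of _ "{\<xi>}"], rule exI[of _ "\<lambda>_. 1"]) (simp add: scaleC_one)

lemma cspan_subset:
  assumes "csubspace M" "X \<subseteq> M"
  shows "cspan X \<subseteq> M"
proof
  fix x assume "x \<in> cspan X"
  then obtain F c where "F \<subseteq> X" "x = (\<Sum>v\<in>F. scaleC (c v) v)" unfolding cspan_def by blast
  then show "x \<in> M" using assms by (auto intro!: csubspace_sum csubspace_scaleC)
qed

lemma closure_csubspace:
  fixes S :: "'a::complex_inner set"
  assumes "csubspace S"
  shows "csubspace (closure S)"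
  unfolding csubspace_def
proof (intro conjI ballI allI)
  show "0 \<in> closure S" using csubspace_zero[OF assms] closure_subset by blast
next
  fix x y assume "x \<in> closure S" "y \<in> closure S"
  then obtain f g where f: "\<forall>n. f n \<in> S" "f \<longlonglongrightarrow> x" and g: "\<forall>n. g n \<in> S" "g \<longlonglongrightarrow> y"
    unfolding closure_sequential by blast
  have "\<forall>n. f n + g n \<in> S" using f g csubspace_add[OF assms] by blast
  moreover have "(\<lambda>n. f n + g n) \<longlonglongrightarrow> x + y" using f g by (intro tendsto_add) auto
  ultimately show "x + y \<in> closure S"
    unfolding closure_sequential by (intro exI[of _ "\<lambda>n. f n + g n"] conjI)
next
  fix c x assume "x \<in> closure S"
  then obtain f where f: "\<forall>n. f n \<in> S" "f \<longlonglongrightarrow> x" unfolding closure_sequential by blast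
  have "\<forall>n. scaleC c (f n) \<in> S" using f csubspace_scaleC[OF assms] by blast
  moreover have "(\<lambda>n. scaleC c (f n)) \<longlonglongrightarrow> scaleC c x"
    using bounded_linear.tendsto[OF bounded_linear_scaleC f(2)] .
  ultimately show "scaleC c x \<in> closure S"
    unfolding closure_sequential by (intro exI[of _ "\<lambda>n. scaleC c (f n)"] conjI)
qed

lemma closed_cspan_csubspace: "csubspace (closed_cspan X)"
  unfolding closed_cspan_def by (intro closure_csubspace cspan_csubspace)

lemma closed_closed_cspan: "closed (closed_cspan X)"
  unfolding closed_cspan_def by simp

lemma subset_closed_cspan: "X \<subseteq> closed_cspan X"
  unfolding closed_cspan_def using in_cspan closure_subset by blast

lemma closed_cspan_subset: "csubspace M \<Longrightarrow> closed M \<Longrightarrow> X \<subseteq> M \<Longrightarrow> closed_cspan X \<subseteq> M"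
  unfolding closed_cspan_def by (intro closure_minimal cspan_subset)

lemma range_idempotent_subset_cspan:
  assumes r: "bop r" "\<And>x. r (r x) = r x"
  shows "range r \<subseteq> cspan {\<xi>. norm \<xi> = 1 \<and> r \<xi> = \<xi>}"
proof
  fix y assume "y \<in> range r"
  then have ry: "r y = y" using r(2) by auto
  show "y \<in> cspan {\<xi>. norm \<xi> = 1 \<and> r \<xi> = \<xi>}"
  proof (cases "y = 0")
    case True
    then show ?thesis using csubspace_zero[OF cspan_csubspace] by simp
  next
    case False
    define \<xi> where "\<xi> = scaleC (complex_of_real (1 / norm y)) y"
    have "cmod (complex_of_real (1 / norm y)) = 1 / norm y" by (simp only: norm_of_real) simp
    then have "norm \<xi> = 1" using False by (simp add: \<xi>_def norm_scaleC)
    moreover have "r \<xi> = \<xi>" by (simp add: \<xi>_def bop_scaleC[OF r(1)] ry)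
    ultimately have "scaleC (complex_of_real (norm y)) \<xi> \<in> cspan {\<xi>. norm \<xi> = 1 \<and> r \<xi> = \<xi>}"
      by (intro csubspace_scaleC[OF cspan_csubspace] in_cspan) simp
    moreover have "complex_of_real (norm y) * complex_of_real (1 / norm y) = 1"
      using False by (simp flip: of_real_mult)
    then have "scaleC (complex_of_real (norm y)) \<xi> = y"
      by (simp only: \<xi>_def scaleC_scaleC scaleC_one)
    ultimately show ?thesis by simp
  qed
qed

lemma proj_sup_closed_cspan_ranges:
  assumes P: "\<forall>r\<in>P. orth_proj r" and q: "orth_proj q"
    and range_q: "range q = closed_cspan (\<Union>r\<in>P. range r)"
  shows "proj_sup P q"
  unfolding proj_sup_def
proof (intro conjI allI ballI impI q)
  fix r assume "r \<in> P"
  then have "range r \<subseteq> range q"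
    using subset_closed_cspan[of "\<Union>r\<in>P. range r"] range_q by blast
  then show "op_le r q" using op_le_orth_proj_iff[of r q] P \<open>r \<in> P\<close> q by blast
next
  fix q' assume q': "orth_proj q' \<and> (\<forall>r\<in>P. op_le r q')"
  have "range r \<subseteq> range q'" if "r \<in> P" for r
    using op_le_orth_proj_iff[of r q'] P q' that by blast
  then have "closed_cspan (\<Union>r\<in>P. range r) \<subseteq> range q'"
    using orth_proj_range_closed_csubspace[of q'] q' by (intro closed_cspan_subset) auto
  then show "op_le q q'" using op_le_orth_proj_iff[of q q'] q q' range_q by blast
qed

lemma proj_sup_exists:
  fixes P :: "('a::chilbert_space \<Rightarrow> 'a) set"
  assumes "\<forall>r\<in>P. orth_proj r"
  obtains q where "proj_sup P q" "range q = closed_cspan (\<Union>r\<in>P. range r)"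
proof -
  obtain q where "orth_proj q" "range q = closed_cspan (\<Union>r\<in>P. range r)"
    using orth_proj_onto[OF closed_cspan_csubspace closed_closed_cspan] .
  then show ?thesis using that proj_sup_closed_cspan_ranges[OF assms] by blast
qed

section \<open>Monotone convergence of positive operators\<close>

lemma quadratic_form_bound_from_ball:
  assumes A: "bop A" and "r > 0" and ball: "\<And>h. norm h < r \<Longrightarrow> Re (cinner (A h) h) \<le> K"
  shows "Re (cinner (A z) z) \<le> 4 * K / r\<^sup>2 * (norm z)\<^sup>2"
proof (cases "z = 0")
  case True
  then show ?thesis by (simp add: bop_zero[OF A])
next
  case False
  define t where "t = r / (2 * norm z)"
  have "t > 0" using \<open>r > 0\<close> False by (simp add: t_def)
  have "norm (scaleR t z) < r" using \<open>r > 0\<close> False \<open>t > 0\<close> by (simp add: t_def)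
  then have "Re (cinner (A (scaleR t z)) (scaleR t z)) \<le> K" by (rule ball)
  then have "t\<^sup>2 * Re (cinner (A z) z) \<le> K"
    by (simp add: bop_scaleR[OF A] cinner_scaleR_left cinner_scaleR_right power2_eq_square)
  then have "Re (cinner (A z) z) \<le> K / t\<^sup>2" using \<open>t > 0\<close> by (simp add: field_simps)
  also have "K / t\<^sup>2 = 4 * K / r\<^sup>2 * (norm z)\<^sup>2"
    using False \<open>r > 0\<close> by (simp add: t_def field_simps power2_eq_square)
  finally show ?thesis .
qed

lemma quadratic_form_parallelogram:
  assumes "bop A"
  shows "cinner (A (a + b)) (a + b) + cinner (A (a - b)) (a - b)
      = 2 * cinner (A a) a + 2 * cinner (A b) b"
  by (simp add: bop_add[OF assms] bop_diff[OF assms] cinner_add_left cinner_add_right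
      cinner_diff_left cinner_diff_right algebra_simps)

lemma closed_quadratic_sublevel:
  assumes "\<And>N. bop (A N)"
  shows "closed {z. \<forall>N. Re (cinner (A N z) z) \<le> c}"
  unfolding closed_sequential_limits
proof (intro allI impI)
  fix x l assume x: "(\<forall>n. x n \<in> {z. \<forall>N. Re (cinner (A N z) z) \<le> c}) \<and> x \<longlonglongrightarrow> l"
  have "Re (cinner (A N l) l) \<le> c" for N
  proof (rule LIMSEQ_le_const2)
    show "(\<lambda>n. Re (cinner (A N (x n)) (x n))) \<longlonglongrightarrow> Re (cinner (A N l) l)"
      by (intro tendsto_Re tendsto_cinner bop_tendsto[OF assms] x[THEN conjunct2])
    show "\<exists>M. \<forall>n\<ge>M. Re (cinner (A N (x n)) (x n)) \<le> c" using x by auto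
  qed
  then show "l \<in> {z. \<forall>N. Re (cinner (A N z) z) \<le> c}" by simp
qed

lemma closed_cover_interior_nonempty:
  fixes F :: "nat \<Rightarrow> 'a::complete_space set"
  assumes "\<And>k. closed (F k)" and "\<Union>(range F) = UNIV"
  obtains k where "interior (F k) \<noteq> {}"
proof -
  have "\<exists>k. interior (F k) \<noteq> {}"
  proof (rule ccontr)
    assume "\<not> ?thesis"
    then have "euclidean interior_of \<Union>(range F) = {}"
      by (intro Baire_category_alt)
        (auto simp: completely_metrizable_space_euclidean assms(1) closed_closedin [symmetric])
    then show False using assms(2) by simp
  qed
  then show ?thesis using that by blast
qed

lemma pos_op_quadratic_bound_recentre:
  assumes A: "pos_op A" and ball: "\<And>z. z \<in> ball z0 r \<Longrightarrow> Re (cinner (A z) z) \<le> K"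
    and "norm h < r"
  shows "Re (cinner (A h) h) \<le> 4 * K"
proof -
  have "r > 0" using norm_ge_zero[of h] \<open>norm h < r\<close> by linarith
  then have "Re (cinner (A (z0 + h)) (z0 + h)) \<le> K" "Re (cinner (A z0) z0) \<le> K"
    using ball \<open>norm h < r\<close> by (auto simp: dist_norm)
  moreover have "Re (cinner (A ((z0 + h) + z0)) ((z0 + h) + z0))
      + Re (cinner (A ((z0 + h) - z0)) ((z0 + h) - z0))
      = 2 * Re (cinner (A (z0 + h)) (z0 + h)) + 2 * Re (cinner (A z0) z0)"
    using arg_cong[OF quadratic_form_parallelogram[OF pos_op_bop[OF A], of "z0 + h" z0], of Re]
    by simp
  moreover have "Re (cinner (A ((z0 + h) + z0)) ((z0 + h) + z0)) \<ge> 0" by (rule pos_op_ge0[OF A])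
  ultimately show ?thesis by simp
qed

text \<open>Uniform boundedness principle for quadratic forms: the sets where all forms are
bounded by k are closed and cover the space, so by Baire one of them contains a ball.\<close>

lemma pos_op_uniform_bound:
  fixes A :: "nat \<Rightarrow> 'a::chilbert_space \<Rightarrow> 'a"
  assumes pos: "\<And>N. pos_op (A N)"
    and bounded: "\<And>\<eta>. \<exists>M. \<forall>N. Re (cinner (A N \<eta>) \<eta>) \<le> M"
  obtains C where "C > 0" "\<And>N z. Re (cinner (A N z) z) \<le> C * (norm z)\<^sup>2"
proof -
  define Q where "Q N z = Re (cinner (A N z) z)" for N z
  define F where "F k = {z. \<forall>N. Q N z \<le> real k}" for k :: nat
  have bA: "bop (A N)" for N using pos by (rule pos_op_bop)
  have closed: "closed (F k)" for k
    unfolding F_def Q_def by (rule closed_quadratic_sublevel[OF bA])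
  have cover: "\<Union>(range F) = UNIV"
  proof -
    have "z \<in> \<Union>(range F)" for z
    proof -
      obtain M where "\<forall>N. Q N z \<le> M" using bounded[of z] unfolding Q_def by blast
      then have "z \<in> F (nat \<lceil>M\<rceil>)"
        unfolding F_def using real_nat_ceiling_ge[of M] by (auto intro: order_trans)
      then show ?thesis by blast
    qed
    then show ?thesis by blast
  qed
  obtain k z0 where "z0 \<in> interior (F k)"
    using closed_cover_interior_nonempty[OF closed cover] by blast
  then obtain r where "r > 0" and ball: "ball z0 r \<subseteq> F k"
    by (meson open_contains_ball open_interior interior_subset order_trans)
  have ball_bound: "Q N h \<le> 4 * real k" if "norm h < r" for N h
    using pos_op_quadratic_bound_recentre[OF pos[of N], of z0 r "real k" h] ball that
    unfolding Q_def F_def by blast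
  define C where "C = 16 * real k / r\<^sup>2 + 1"
  have "Q N z \<le> C * (norm z)\<^sup>2" for N z
  proof -
    have "Q N z \<le> 4 * (4 * real k) / r\<^sup>2 * (norm z)\<^sup>2"
      using quadratic_form_bound_from_ball[OF bA \<open>r > 0\<close>] ball_bound
      unfolding Q_def by blast
    also have "\<dots> \<le> C * (norm z)\<^sup>2" unfolding C_def by (intro mult_right_mono) auto
    finally show ?thesis .
  qed
  moreover have "C > 0" 
  proof -
    have "16 * real k / r\<^sup>2 \<ge> 0" by simp
    then show ?thesis unfolding C_def by linarith
  qed
  ultimately show ?thesis using that unfolding Q_def by blast
qed

lemma Cauchy_if_increments_dominated:
  fixes f :: "nat \<Rightarrow> 'a::real_normed_vector"
  assumes g: "convergent g" and "C > 0"
    and dom: "\<And>m n. m \<le> n \<Longrightarrow> (norm (f n - f m))\<^sup>2 \<le> C * (g n - g m)"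
  shows "Cauchy f"
proof (rule metric_CauchyI)
  fix e :: real assume "e > 0"
  then have "e\<^sup>2 / C > 0" using \<open>C > 0\<close> by simp
  then obtain M where M: "\<And>m n. m \<ge> M \<Longrightarrow> n \<ge> M \<Longrightarrow> dist (g m) (g n) < e\<^sup>2 / C"
    using convergent_Cauchy[OF g] unfolding Cauchy_def by meson
  have close: "dist (f m) (f n) < e" if "m \<le> n" "m \<ge> M" for m n
  proof -
    have "(norm (f n - f m))\<^sup>2 \<le> C * (g n - g m)" by (rule dom[OF that(1)])
    also have "\<dots> < C * (e\<^sup>2 / C)"
    proof (rule mult_strict_left_mono[OF _ \<open>C > 0\<close>])
      show "g n - g m < e\<^sup>2 / C" using M[of m n] that by (simp add: dist_real_def abs_less_iff)
    qed
    also have "\<dots> = e\<^sup>2" using \<open>C > 0\<close> by simp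
    finally show ?thesis
      using \<open>e > 0\<close> by (simp add: dist_norm norm_minus_commute power2_less_imp_less)
  qed
  show "\<exists>M. \<forall>m\<ge>M. \<forall>n\<ge>M. dist (f m) (f n) < e"
    using close close[THEN dist_commute_lessI] by (metis nle_le)
qed

lemma pos_op_incseq_convergent:
  fixes A :: "nat \<Rightarrow> 'a::chilbert_space \<Rightarrow> 'a"
  assumes pos: "\<And>N. pos_op (A N)" and mono: "\<And>m N. m \<le> N \<Longrightarrow> op_le (A m) (A N)"
    and "C > 0" and C: "\<And>N z. Re (cinner (A N z) z) \<le> C * (norm z)\<^sup>2"
  shows "convergent (\<lambda>N. A N z)"
proof -
  have "incseq (\<lambda>N. Re (cinner (A N z) z))" by (intro monoI op_le_quadratic mono)
  moreover have "bdd_above (range (\<lambda>N. Re (cinner (A N z) z)))"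
    using C by (intro bdd_aboveI[where M = "C * (norm z)\<^sup>2"]) auto
  ultimately have "convergent (\<lambda>N. Re (cinner (A N z) z))"
    unfolding convergent_def by (blast intro: LIMSEQ_incseq_SUP)
  moreover have "(norm (A n z - A m z))\<^sup>2 \<le> C * (Re (cinner (A n z) z) - Re (cinner (A m z) z))"
    if "m \<le> n" for m n
  proof -
    have "Re (cinner (A n w - A m w) w) \<le> C * (norm w)\<^sup>2" for w
      using C[of n w] pos_op_ge0[OF pos, of m w] by (simp add: cinner_diff_left)
    then show ?thesis
      using pos_op_norm_sq_le[OF mono[OF that, unfolded op_le_def] \<open>C > 0\<close>]
      by (simp add: cinner_diff_left)
  qed
  ultimately have "Cauchy (\<lambda>N. A N z)" by (rule Cauchy_if_increments_dominated[OF _ \<open>C > 0\<close>])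
  then show ?thesis by (simp add: Cauchy_convergent_iff)
qed

lemma pos_op_incseq_strong_limit:
  fixes A :: "nat \<Rightarrow> 'a::chilbert_space \<Rightarrow> 'a"
  assumes pos: "\<And>N. pos_op (A N)" and mono: "\<And>m N. m \<le> N \<Longrightarrow> op_le (A m) (A N)"
    and bounded: "\<And>\<eta>. \<exists>M. \<forall>N. Re (cinner (A N \<eta>) \<eta>) \<le> M"
  obtains S where "bop S" "\<And>\<eta>. (\<lambda>N. A N \<eta>) \<longlonglongrightarrow> S \<eta>"
proof -
  obtain C where "C > 0" and C: "\<And>N z. Re (cinner (A N z) z) \<le> C * (norm z)\<^sup>2"
    using pos_op_uniform_bound[OF pos bounded] by blast
  have bA: "bop (A N)" for N using pos by (rule pos_op_bop)
  have convergent: "convergent (\<lambda>N. A N z)" for z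
    by (rule pos_op_incseq_convergent[OF pos mono \<open>C > 0\<close> C])
  define S where "S z = lim (\<lambda>N. A N z)" for z
  have lim: "(\<lambda>N. A N z) \<longlonglongrightarrow> S z" for z
    using convergent by (simp add: S_def convergent_LIMSEQ_iff)
  have "bop S"
  proof (rule bopI[where K = C])
    show "S (x + y) = S x + S y" for x y
    proof (rule LIMSEQ_unique[OF lim])
      show "(\<lambda>N. A N (x + y)) \<longlonglongrightarrow> S x + S y"
        using tendsto_add[OF lim[of x] lim[of y]] by (simp add: bop_add[OF bA])
    qed
    show "S (scaleC c x) = scaleC c (S x)" for c x
    proof (rule LIMSEQ_unique[OF lim])
      show "(\<lambda>N. A N (scaleC c x)) \<longlonglongrightarrow> scaleC c (S x)"
        using bounded_linear.tendsto[OF bounded_linear_scaleC lim[of x]]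
        by (simp add: bop_scaleC[OF bA])
    qed
    show "norm (S z) \<le> norm z * C" for z
      using pos_op_norm_le[OF pos \<open>C > 0\<close> C]
      by (intro LIMSEQ_le_const2[OF tendsto_norm[OF lim[of z]]]) blast
  qed
  then show ?thesis using that lim by blast
qed

section \<open>Markov operators and T-summability\<close>

lemma markov_operator_bop: "markov_operator T \<Longrightarrow> bop A \<Longrightarrow> bop (T A)"
  by (simp add: markov_operator_def)

lemma markov_operator_add:
  "markov_operator T \<Longrightarrow> bop A \<Longrightarrow> bop B \<Longrightarrow> T (\<lambda>x. A x + B x) = (\<lambda>x. T A x + T B x)"
  by (simp add: markov_operator_def)

lemma markov_operator_scaleC:
  "markov_operator T \<Longrightarrow> bop A \<Longrightarrow> T (\<lambda>x. scaleC c (A x)) = (\<lambda>x. scaleC c (T A x))"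
  by (simp add: markov_operator_def)

lemma markov_operator_diff:
  assumes T: "markov_operator T" and A: "bop A" and B: "bop B"
  shows "T (\<lambda>x. A x - B x) = (\<lambda>x. T A x - T B x)"
proof -
  have "T (\<lambda>x. A x + scaleC (-1) (B x)) = (\<lambda>x. T A x + T (\<lambda>x. scaleC (-1) (B x)) x)"
    by (rule markov_operator_add[OF T A bop_scaleC_op[OF B]])
  also have "T (\<lambda>x. scaleC (-1) (B x)) = (\<lambda>x. scaleC (-1) (T B x))"
    by (rule markov_operator_scaleC[OF T B])
  finally show ?thesis by (simp add: scaleC_minus_one)
qed

text \<open>Only the 1 \<times> 1 case of complete positivity is needed.\<close>

lemma markov_operator_pos_op:
  assumes T: "markov_operator T" and A: "pos_op A"
  shows "pos_op (T A)"
proof -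
  have "matrix_pos 1 (\<lambda>i j. A)"
    using A by (simp add: matrix_pos_def pos_op_def)
  then have "matrix_pos 1 (\<lambda>i j. T A)"
    using T by (simp add: markov_operator_def completely_positive_def)
  then have "Im (cinner (T A z) z) = 0 \<and> 0 \<le> Re (cinner (T A z) z)" for z
    unfolding matrix_pos_def by (auto dest: spec[of _ "\<lambda>_. z"])
  then show ?thesis
    using markov_operator_bop[OF T pos_op_bop[OF A]] by (simp add: pos_op_def)
qed

lemma markov_operator_mono:
  assumes T: "markov_operator T" and "bop A" "bop B" "op_le A B"
  shows "op_le (T A) (T B)"
  using markov_operator_pos_op[OF T, of "\<lambda>x. B x - A x"]
    markov_operator_diff[OF T assms(3,2)] assms(4)
  by (simp add: op_le_def)

lemma funpow_markov_bop: "markov_operator T \<Longrightarrow> bop A \<Longrightarrow> bop ((T ^^ n) A)"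
  by (induction n) (simp_all add: markov_operator_bop)

lemma funpow_markov_pos_op: "markov_operator T \<Longrightarrow> pos_op A \<Longrightarrow> pos_op ((T ^^ n) A)"
  by (induction n) (simp_all add: markov_operator_pos_op)

lemma funpow_markov_mono:
  "markov_operator T \<Longrightarrow> bop A \<Longrightarrow> bop B \<Longrightarrow> op_le A B \<Longrightarrow> op_le ((T ^^ n) A) ((T ^^ n) B)"
  by (induction n) (simp_all add: markov_operator_mono funpow_markov_bop)

lemma T_summable_imp_summable_cinner:
  assumes "T_summable T x"
  shows "summable (\<lambda>n. cinner ((T ^^ n) x \<eta>) \<eta>)"
proof -
  obtain S where "\<And>\<eta>. (\<lambda>N. \<Sum>n<N. (T ^^ n) x \<eta>) \<longlonglongrightarrow> S \<eta>"
    using assms by (auto simp: T_summable_def)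
  then have "(\<lambda>N. cinner (\<Sum>n<N. (T ^^ n) x \<eta>) \<eta>) \<longlonglongrightarrow> cinner (S \<eta>) \<eta>"
    by (rule tendsto_cinner[OF _ tendsto_const])
  then have "(\<lambda>n. cinner ((T ^^ n) x \<eta>) \<eta>) sums cinner (S \<eta>) \<eta>"
    unfolding sums_def cinner_sum_left .
  then show ?thesis by (rule sums_summable)
qed

lemma T_summable_iff_summable_cinner:
  fixes T :: "('a::chilbert_space \<Rightarrow> 'a) \<Rightarrow> ('a \<Rightarrow> 'a)"
  assumes pos: "\<And>n. pos_op ((T ^^ n) x)"
  shows "T_summable T x \<longleftrightarrow> (\<forall>\<eta>. summable (\<lambda>n. cinner ((T ^^ n) x \<eta>) \<eta>))"
proof (intro iffI allI T_summable_imp_summable_cinner)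
  assume summable: "\<forall>\<eta>. summable (\<lambda>n. cinner ((T ^^ n) x \<eta>) \<eta>)"
  define A where "A N = (\<lambda>\<eta>. \<Sum>n<N. (T ^^ n) x \<eta>)" for N
  have "pos_op (A N)" for N unfolding A_def by (rule pos_op_sum[OF pos])
  moreover have "op_le (A m) (A N)" if "m \<le> N" for m N
  proof -
    have "A N \<eta> - A m \<eta> = (\<Sum>n\<in>{m..<N}. (T ^^ n) x \<eta>)" for \<eta>
      unfolding A_def using sum_diff_nat_ivl[of 0 m N "\<lambda>n. (T ^^ n) x \<eta>"] that
      by (simp add: atLeast0LessThan)
    then have "(\<lambda>\<eta>. A N \<eta> - A m \<eta>) = (\<lambda>\<eta>. \<Sum>n\<in>{m..<N}. (T ^^ n) x \<eta>)" by auto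
    then show ?thesis
      unfolding op_le_def using pos_op_sum[of "{m..<N}" "\<lambda>n. (T ^^ n) x"] pos by simp
  qed
  moreover have "\<exists>M. \<forall>N. Re (cinner (A N \<eta>) \<eta>) \<le> M" for \<eta>
  proof -
    define f where "f n = Re (cinner ((T ^^ n) x \<eta>) \<eta>)" for n
    have "Re (cinner (A N \<eta>) \<eta>) = sum f {..<N}" for N by (simp add: A_def f_def cinner_sum_left)
    also have "sum f {..<N} \<le> suminf f" for N
      using summable_Re[OF summable[rule_format, of \<eta>]] pos_op_ge0[OF pos]
      unfolding f_def by (intro sum_le_suminf) auto
    finally show ?thesis by blast
  qed
  ultimately obtain S where "bop S" "\<And>\<eta>. (\<lambda>N. A N \<eta>) \<longlonglongrightarrow> S \<eta>"
    using pos_op_incseq_strong_limit[of A] by blast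
  then show "T_summable T x" using pos[of 0] unfolding T_summable_def A_def by auto
qed

lemma T_summable_dominated:
  fixes T :: "('a::chilbert_space \<Rightarrow> 'a) \<Rightarrow> ('a \<Rightarrow> 'a)"
  assumes pos: "\<And>n. pos_op ((T ^^ n) a)" and le: "\<And>n. op_le ((T ^^ n) a) ((T ^^ n) b)"
    and "T_summable T b"
  shows "T_summable T a"
  unfolding T_summable_iff_summable_cinner[OF pos]
proof
  fix \<eta>
  have "norm (cinner ((T ^^ n) a \<eta>) \<eta>) = Re (cinner ((T ^^ n) a \<eta>) \<eta>)" for n
    by (subst pos_op_cinner_real[OF pos]) (simp add: pos_op_ge0[OF pos])
  then have dominated: "norm (cinner ((T ^^ n) a \<eta>) \<eta>) \<le> Re (cinner ((T ^^ n) b \<eta>) \<eta>)" for n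
    using op_le_quadratic[OF le] by simp
  have "summable (\<lambda>n. Re (cinner ((T ^^ n) b \<eta>) \<eta>))"
    by (intro summable_Re T_summable_imp_summable_cinner \<open>T_summable T b\<close>)
  then show "summable (\<lambda>n. cinner ((T ^^ n) a \<eta>) \<eta>)"
    by (rule summable_comparison_test'[where N = 0]) (rule dominated)
qed

lemma T_summable_rank_one_iff:
  fixes T :: "('a::chilbert_space \<Rightarrow> 'a) \<Rightarrow> ('a \<Rightarrow> 'a)"
  assumes "markov_operator T" "norm \<xi> = 1"
  shows "T_summable T (rank_one \<xi>) \<longleftrightarrow> (\<forall>\<eta>. summable (\<lambda>n. cinner ((T ^^ n) (rank_one \<xi>) \<eta>) \<eta>))"
  by (intro T_summable_iff_summable_cinner funpow_markov_pos_op orth_proj_pos_op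
      orth_proj_rank_one assms)

section \<open>Transient projections\<close>

lemma transient_iff_range_subset:
  fixes T :: "('a::chilbert_space \<Rightarrow> 'a) \<Rightarrow> ('a \<Rightarrow> 'a)"
  shows "transient T p \<longleftrightarrow> orth_proj p \<and>
    (\<exists>P. (\<forall>r\<in>P. orth_proj r \<and> T_summable T r) \<and> range p \<subseteq> closed_cspan (\<Union>r\<in>P. range r))"
proof
  assume "transient T p"
  then obtain P q where p: "orth_proj p" and P: "\<forall>r\<in>P. orth_proj r \<and> T_summable T r"
    and sup: "proj_sup P q" and "op_le p q"
    unfolding transient_def by blast
  obtain q' where sup': "proj_sup P q'" and range_q': "range q' = closed_cspan (\<Union>r\<in>P. range r)"
    using proj_sup_exists P by blast
  have q: "orth_proj q" and q': "orth_proj q'" using sup sup' by (simp_all add: proj_sup_def)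
  have "op_le q q'" using sup sup' unfolding proj_sup_def by blast
  then have "range q \<subseteq> range q'" using op_le_orth_proj_iff[OF q q'] by blast
  moreover have "range p \<subseteq> range q" using op_le_orth_proj_iff[OF p q] \<open>op_le p q\<close> by blast
  ultimately have "range p \<subseteq> closed_cspan (\<Union>r\<in>P. range r)"
    unfolding range_q' [symmetric] by (rule order_trans [rotated])
  then show "orth_proj p \<and> (\<exists>P. (\<forall>r\<in>P. orth_proj r \<and> T_summable T r)
      \<and> range p \<subseteq> closed_cspan (\<Union>r\<in>P. range r))"
    using p P by (intro conjI exI[of _ P]) auto
next
  assume "orth_proj p \<and> (\<exists>P. (\<forall>r\<in>P. orth_proj r \<and> T_summable T r)
      \<and> range p \<subseteq> closed_cspan (\<Union>r\<in>P. range r))"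
  then obtain P where p: "orth_proj p" and P: "\<forall>r\<in>P. orth_proj r \<and> T_summable T r"
    and range_p: "range p \<subseteq> closed_cspan (\<Union>r\<in>P. range r)"
    by blast
  obtain q where sup: "proj_sup P q" and "range q = closed_cspan (\<Union>r\<in>P. range r)"
    using proj_sup_exists P by blast
  then have "op_le p q"
    using op_le_orth_proj_iff[OF p, of q] range_p by (simp add: proj_sup_def)
  then show "transient T p" unfolding transient_def using p P sup by blast
qed

lemma transient_imp_summable_rank_ones:
  fixes T :: "('a::chilbert_space \<Rightarrow> 'a) \<Rightarrow> ('a \<Rightarrow> 'a)"
  assumes T: "markov_operator T" and "transient T p"
  shows "\<exists>X. (\<forall>\<xi>\<in>X. norm \<xi> = 1) \<and> range p \<subseteq> closed_cspan X \<and> (\<forall>\<xi>\<in>X. T_summable T (rank_one \<xi>))"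
proof -
  obtain P where P: "\<forall>r\<in>P. orth_proj r \<and> T_summable T r"
    and range_p: "range p \<subseteq> closed_cspan (\<Union>r\<in>P. range r)"
    using \<open>transient T p\<close> transient_iff_range_subset by blast
  define X where "X = {\<xi>. norm \<xi> = 1 \<and> (\<exists>r\<in>P. r \<xi> = \<xi>)}"
  have "T_summable T (rank_one \<xi>)" if "\<xi> \<in> X" for \<xi>
  proof -
    obtain r where r: "orth_proj r" "T_summable T r" "r \<xi> = \<xi>" and "norm \<xi> = 1"
      using \<open>\<xi> \<in> X\<close> P by (auto simp: X_def)
    have t: "orth_proj (rank_one \<xi>)" by (rule orth_proj_rank_one[OF \<open>norm \<xi> = 1\<close>])
    have "rank_one \<xi> x = r (rank_one \<xi> x)" for x
      using r(3) by (simp add: rank_one_def bop_scaleC[OF orth_proj_bop[OF r(1)]])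
    then have "range (rank_one \<xi>) \<subseteq> range r" by (blast intro: range_eqI)
    then have "op_le (rank_one \<xi>) r" using op_le_orth_proj_iff[OF t r(1)] by blast
    then show ?thesis
      by (intro T_summable_dominated[OF funpow_markov_pos_op[OF T orth_proj_pos_op[OF t]]
            funpow_markov_mono[OF T orth_proj_bop[OF t] orth_proj_bop[OF r(1)]] r(2)])
  qed
  moreover have "range r \<subseteq> closed_cspan X" if "r \<in> P" for r
  proof -
    have r: "orth_proj r" using P that by blast
    have "range r \<subseteq> cspan {\<xi>. norm \<xi> = 1 \<and> r \<xi> = \<xi>}"
      by (rule range_idempotent_subset_cspan[OF orth_proj_bop[OF r] orth_proj_idem[OF r]])
    also have "\<dots> \<subseteq> closed_cspan X"
      using that subset_closed_cspan[of X] by (intro cspan_subset[OF closed_cspan_csubspace])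
        (auto simp: X_def)
    finally show ?thesis .
  qed
  then have "closed_cspan (\<Union>r\<in>P. range r) \<subseteq> closed_cspan X"
    by (intro closed_cspan_subset closed_cspan_csubspace closed_closed_cspan UN_least)
  then have "range p \<subseteq> closed_cspan X" using range_p by (rule order_trans [rotated])
  ultimately show ?thesis by (intro exI[of _ X] conjI) (auto simp: X_def)
qed

lemma summable_rank_ones_imp_transient:
  fixes T :: "('a::chilbert_space \<Rightarrow> 'a) \<Rightarrow> ('a \<Rightarrow> 'a)"
  assumes p: "orth_proj p" and X: "\<forall>\<xi>\<in>X. norm \<xi> = 1" "range p \<subseteq> closed_cspan X"
    "\<forall>\<xi>\<in>X. T_summable T (rank_one \<xi>)"
  shows "transient T p"
proof -
  have "\<xi> \<in> range (rank_one \<xi>)" if "\<xi> \<in> X" for \<xi>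
    using rank_one_self[of \<xi>] X(1) that by (metis rangeI)
  then have "X \<subseteq> (\<Union>r\<in>rank_one ` X. range r)" by blast
  then have "closed_cspan X \<subseteq> closed_cspan (\<Union>r\<in>rank_one ` X. range r)"
    using subset_closed_cspan
    by (intro closed_cspan_subset closed_cspan_csubspace closed_closed_cspan) blast
  then have "range p \<subseteq> closed_cspan (\<Union>r\<in>rank_one ` X. range r)"
    using X(2) by (rule order_trans [rotated])
  moreover have "\<forall>r\<in>rank_one ` X. orth_proj r \<and> T_summable T r"
    using X(1,3) orth_proj_rank_one by blast
  ultimately show ?thesis
    unfolding transient_iff_range_subset using p by (intro conjI exI[of _ "rank_one ` X"])
qed

theorem proposition4p7:
  fixes T :: "('a::chilbert_space \<Rightarrow> 'a) \<Rightarrow> ('a \<Rightarrow> 'a)" and p :: "'a \<Rightarrow> 'a"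
  assumes "markov_operator T" and "orth_proj p"
  shows "(transient T p
          \<longleftrightarrow> (\<exists>X. (\<forall>\<xi>\<in>X. norm \<xi> = 1) \<and> range p \<subseteq> closed_cspan X
                  \<and> (\<forall>\<xi>\<in>X. T_summable T (rank_one \<xi>))))
       \<and> ((\<exists>X. (\<forall>\<xi>\<in>X. norm \<xi> = 1) \<and> range p \<subseteq> closed_cspan X
                  \<and> (\<forall>\<xi>\<in>X. T_summable T (rank_one \<xi>)))
          \<longleftrightarrow> (\<exists>X. (\<forall>\<xi>\<in>X. norm \<xi> = 1) \<and> range p \<subseteq> closed_cspan X
                  \<and> (\<forall>\<xi>\<in>X. \<forall>\<eta>. summable (\<lambda>n. cinner ((T ^^ n) (rank_one \<xi>) \<eta>) \<eta>))))"
proof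
  show "transient T p \<longleftrightarrow> (\<exists>X. (\<forall>\<xi>\<in>X. norm \<xi> = 1) \<and> range p \<subseteq> closed_cspan X
      \<and> (\<forall>\<xi>\<in>X. T_summable T (rank_one \<xi>)))"
    using transient_imp_summable_rank_ones[OF assms(1)]
      summable_rank_ones_imp_transient[OF assms(2)]
    by (intro iffI) (assumption | elim exE conjE)+
  have "(\<forall>\<xi>\<in>X. norm \<xi> = 1) \<and> range p \<subseteq> closed_cspan X \<and> (\<forall>\<xi>\<in>X. T_summable T (rank_one \<xi>))
    \<longleftrightarrow> (\<forall>\<xi>\<in>X. norm \<xi> = 1) \<and> range p \<subseteq> closed_cspan X
      \<and> (\<forall>\<xi>\<in>X. \<forall>\<eta>. summable (\<lambda>n. cinner ((T ^^ n) (rank_one \<xi>) \<eta>) \<eta>))" for X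
    using T_summable_rank_one_iff[OF assms(1)] by (auto simp del: ball_simps)
  then show "(\<exists>X. (\<forall>\<xi>\<in>X. norm \<xi> = 1) \<and> range p \<subseteq> closed_cspan X
      \<and> (\<forall>\<xi>\<in>X. T_summable T (rank_one \<xi>)))
    \<longleftrightarrow> (\<exists>X. (\<forall>\<xi>\<in>X. norm \<xi> = 1) \<and> range p \<subseteq> closed_cspan X
      \<and> (\<forall>\<xi>\<in>X. \<forall>\<eta>. summable (\<lambda>n. cinner ((T ^^ n) (rank_one \<xi>) \<eta>) \<eta>)))"
    by (simp only:)
qed

end
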